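(* Let $e\ge4$, let $I\subseteq\mathbb Z$ be a union of $c$ congruence classes modulo $e$ with $2\le c\le e-2$, put $\bar c=e-c$, and fix $u$ with $0\le u\le n$. Suppose $\nu$ is an $I$-separated $(u,I)$-partition such that $\nu_{\bar I}$ is not $\bar c$-restricted, and let $s\ge1$ be minimal with $(\nu_{\bar I})_s-(\nu_{\bar I})_{s+1}\ge\bar c$. Let $\tau$ be the partition with $\tau_r=(\nu_{\bar I})_r-\bar c$ for $r\le s$ and $\tau_r=(\nu_{\bar I})_r$ for $r>s$ (so $\nu_{\bar I}=(1^s)\,\|_{\bar c}\,\tau$). Define the $(u,I)$-partition $\xi$ by $\xi_I=(s)\,\|_c\,\nu_I$ (the partition whose parts are the parts of $\nu_I$ together with $c$ copies of $s$) and $\xi_{\bar I}=\tau$. Then $\nu$ and $\xi$ are $(e,\bar c)$-equivalent.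
   Context: $\bar I=\mathbb Z\setminus I$. Fix a large integer $n$ divisible by $e$; abacus displays have $n$ beads: the display of $\lambda$ is the set of occupied positions $\{\lambda_r+r-1:1\le r\le n\}\subseteq\mathbb Z_{\ge0}$, and a set of $N$ occupied positions $b_1>\dots>b_N$ determines the partition with parts $b_r+r-N$. Discarding positions not in $I$ and relabelling the rest $0,1,2,\dots$ in increasing order gives the display of a partition $\lambda_I$; discarding positions in $I$ gives $\lambda_{\bar I}$. $\lambda$ is a $(u,I)$-partition if exactly $u$ of its $n$ beads lie in positions in $I$; such a partition is determined by $(\lambda_I,\lambda_{\bar I})$, and any pair of partitions arises. $\lambda$ is $I$-separated if the first empty position in $I$ comes after the last occupied position in $\bar I$. For partitions $\alpha,\beta$: $\alpha\,\|_{\bar c}\,\beta=(\bar c\alpha_1+\beta_1,\bar c\alpha_2+\beta_2,\dots)$, and $\alpha\,\|_c\,\beta$ is the partition formed by the parts of $\beta$ together with $c$ copies of each part of $\alpha$, in decreasing order. A partition is $k$-restricted if $\lambda_r-\lambda_{r+1}<k$ for all $r$. $(e,\bar c)$-ladders are the sets $\{(r+k(\bar c-e),c'+k\bar c):k\in\mathbb Z\}$ for $(r,c')\in\mathbb Z^2$, and two partitions are $(e,\bar c)$-equivalent if they have the same number of nodes in every $(e,\bar c)$-ladder. *)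

theory Defs
  imports Main
begin

definition is_partition :: "nat list \<Rightarrow> bool" where
  "is_partition xs \<longleftrightarrow> sorted_wrt (\<ge>) xs \<and> 0 \<notin> set xs"

definition part :: "nat list \<Rightarrow> nat \<Rightarrow> nat" where
  "part xs r = (if 1 \<le> r \<and> r \<le> length xs then xs ! (r - 1) else 0)"

definition union_of_classes :: "nat \<Rightarrow> nat \<Rightarrow> int set \<Rightarrow> bool" where
  "union_of_classes e c I \<longleftrightarrow>
     (\<exists>C. C \<subseteq> {0..<int e} \<and> card C = c \<and> I = {x. x mod int e \<in> C})"

definition display :: "nat \<Rightarrow> nat list \<Rightarrow> nat set" where
  "display n xs = {part xs r + (n - r) | r. 1 \<le> r \<and> r \<le> n}"

text \<open>Partition determined by a finite set of occupied positions b_1 > ... > b_N: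
  parts b_r + r - N.\<close>
definition partition_of :: "nat set \<Rightarrow> nat list" where
  "partition_of B = (let N = card B; bs = rev (sorted_list_of_set B) in
      filter (\<lambda>x. 0 < x) (map (\<lambda>r. (bs ! (r - 1) + r) - N) [1..<N + 1]))"

definition relabel :: "int set \<Rightarrow> nat \<Rightarrow> nat" where
  "relabel J p = card {q::nat. q < p \<and> int q \<in> J}"

definition sub_part :: "nat \<Rightarrow> int set \<Rightarrow> nat list \<Rightarrow> nat list" where
  "sub_part n J xs = partition_of (relabel J ` {p \<in> display n xs. int p \<in> J})"

definition I_part :: "nat \<Rightarrow> int set \<Rightarrow> nat list \<Rightarrow> nat list" where
  "I_part n I xs = sub_part n I xs"

definition comp_part :: "nat \<Rightarrow> int set \<Rightarrow> nat list \<Rightarrow> nat list" where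
  "comp_part n I xs = sub_part n (- I) xs"

definition uI_partition :: "nat \<Rightarrow> int set \<Rightarrow> nat \<Rightarrow> nat list \<Rightarrow> bool" where
  "uI_partition n I u xs \<longleftrightarrow> is_partition xs \<and> length xs \<le> n \<and>
     card {p \<in> display n xs. int p \<in> I} = u"

definition I_separated :: "nat \<Rightarrow> int set \<Rightarrow> nat list \<Rightarrow> bool" where
  "I_separated n I xs \<longleftrightarrow>
     (\<forall>p q. p \<in> display n xs \<and> int p \<notin> I \<and> int q \<in> I \<and> q \<notin> display n xs \<longrightarrow> p < q)"

definition restricted :: "nat \<Rightarrow> nat list \<Rightarrow> bool" where
  "restricted k xs \<longleftrightarrow> (\<forall>r\<ge>1. part xs r - part xs (Suc r) < k)"

definition copies_join :: "nat \<Rightarrow> nat list \<Rightarrow> nat list \<Rightarrow> nat list" where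
  "copies_join c alpha beta = rev (sort (concat (map (replicate c) alpha) @ beta))"

definition tau_of :: "nat \<Rightarrow> nat \<Rightarrow> nat list \<Rightarrow> nat list" where
  "tau_of cb s xs = filter (\<lambda>x. 0 < x)
     (map (\<lambda>r. if r \<le> s then part xs r - cb else part xs r) [1..<length xs + 1])"

definition nodes :: "nat list \<Rightarrow> (int \<times> int) set" where
  "nodes xs = {(int r, int j) | r j. 1 \<le> r \<and> r \<le> length xs \<and> 1 \<le> j \<and> j \<le> part xs r}"

definition ladder :: "nat \<Rightarrow> nat \<Rightarrow> int \<Rightarrow> int \<Rightarrow> (int \<times> int) set" where
  "ladder e cb r c' = {(r + k * (int cb - int e), c' + k * int cb) | k. True}"

definition ladder_equiv :: "nat \<Rightarrow> nat \<Rightarrow> nat list \<Rightarrow> nat list \<Rightarrow> bool" where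
  "ladder_equiv e cb xs ys \<longleftrightarrow>
     (\<forall>r c'. card (nodes xs \<inter> ladder e cb r c') = card (nodes ys \<inter> ladder e cb r c'))"

end

theory Submission
  imports Defs "HOL-Library.Multiset"
begin

text \<open>
  A gap of at least \<open>e - c\<close> after row
  \<open>s\<close> of the partition read off from the beads outside \<open>I\<close>, together with \<open>I\<close>-separation, means
  that the \<open>e\<close> positions just below the bead of that row are occupied exactly at the positions in
  \<open>I\<close>. Remove this full window, slide down by \<open>e\<close> all beads between it and the \<open>s\<close>-th empty
  position in \<open>I\<close>, and refill a full window just below that empty position. Outside \<open>I\<close> this
  lowers each of the first \<open>s\<close> parts by \<open>e - c\<close>, giving \<open>\<tau>\<close>; inside \<open>I\<close> the \<open>c\<close> new beads each
  have \<open>s\<close> gaps below them, giving \<open>c\<close> new parts \<open>s\<close>.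

  The number of nodes on a ladder only depends on the multiset of the keys
  \<open>(c \<cdot> b + e \<cdot> r, r mod c)\<close> of the beads \<open>b\<close> in the rows \<open>r\<close>. A slid bead moves down by \<open>e\<close>
  while its row index grows by \<open>c\<close>, which keeps its key, and by periodicity the refilled window
  carries the same keys as the removed one.
\<close>

definition count_below :: "(nat \<Rightarrow> bool) \<Rightarrow> nat \<Rightarrow> nat" where
  "count_below P x = card {y. y < x \<and> P y}"

lemma count_below_0 [simp]: "count_below P 0 = 0"
  by (simp add: count_below_def)

lemma count_below_Suc: "count_below P (Suc x) = count_below P x + (if P x then 1 else 0)"
proof -
  have "{y. y < Suc x \<and> P y} = {y. y < x \<and> P y} \<union> (if P x then {x} else {})"
    by (auto simp: less_Suc_eq)
  then show ?thesis
    unfolding count_below_def by (auto simp: card_insert_if)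
qed

lemma count_below_mono: "x \<le> y \<Longrightarrow> count_below P x \<le> count_below P y"
  unfolding count_below_def by (rule card_mono) auto

lemma count_below_strict_mono: "x < y \<Longrightarrow> P x \<Longrightarrow> count_below P x < count_below P y"
  using count_below_mono[of "Suc x" y P] by (simp add: count_below_Suc)

lemma count_below_less_iff:
  assumes "P x" "P y"
  shows "count_below P x < count_below P y \<longleftrightarrow> x < y"
  using count_below_strict_mono[of x y P] count_below_mono[of y x P] assms by (meson leD le_less_linear)

lemma count_below_le_iff:
  assumes "P x" "P y"
  shows "count_below P x \<le> count_below P y \<longleftrightarrow> x \<le> y"
  using count_below_less_iff[OF assms(2,1)] by (simp add: not_less[symmetric])

lemma inj_on_count_below: "inj_on (count_below P) {x. P x}"
proof (rule inj_onI)
  fix x y assume "x \<in> {x. P x}" "y \<in> {x. P x}" "count_below P x = count_below P y"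
  then show "x = y"
    using count_below_less_iff[of P x y] count_below_less_iff[of P y x] by (auto simp: neq_iff)
qed

lemma card_interval_eq_count_below_diff:
  assumes "x \<le> y"
  shows "card {z. x \<le> z \<and> z < y \<and> P z} = count_below P y - count_below P x"
proof -
  have "{z. z < y \<and> P z} = {z. z < x \<and> P z} \<union> {z. x \<le> z \<and> z < y \<and> P z}"
    using assms by auto
  moreover have "card ({z. z < x \<and> P z} \<union> {z. x \<le> z \<and> z < y \<and> P z}) =
      count_below P x + card {z. x \<le> z \<and> z < y \<and> P z}"
    unfolding count_below_def by (subst card_Un_disjoint) auto
  ultimately show ?thesis
    unfolding count_below_def by simp
qed

lemma count_below_add_period:
  assumes "\<And>x. P (x + e) = P x"
  shows "count_below P (x + e) = count_below P x + count_below P e"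
  by (induction x) (auto simp: count_below_Suc assms[of 0, simplified] assms)

lemma card_window_eq_count_below_period:
  assumes "\<And>x. P (x + e) = P x"
  shows "card {x. y \<le> x \<and> x < y + e \<and> P x} = count_below P e"
  using card_interval_eq_count_below_diff[of y "y + e" P] count_below_add_period[of P e y, OF assms]
  by simp

lemma count_below_Not_add: "count_below (\<lambda>y. \<not> P y) x + count_below P x = x"
  by (induction x) (auto simp: count_below_Suc)

lemma count_below_unbounded:
  assumes "\<And>m. \<exists>x\<ge>m. P x"
  shows "\<exists>y. k < count_below P y"
proof (induction k)
  case 0
  obtain x where "P x" using assms by blast
  then show ?case using count_below_strict_mono[of x "Suc x" P] by (intro exI[of _ "Suc x"]) simp
next
  case (Suc k)
  then obtain y where "k < count_below P y" by blast
  obtain x where "y \<le> x" "P x" using assms by blast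
  then have "k < count_below P x" using \<open>k < count_below P y\<close> count_below_mono[of y x P] by simp
  then show ?case using \<open>P x\<close> by (auto simp: count_below_Suc intro!: exI[of _ "Suc x"])
qed

lemma ex_count_below_eq:
  assumes "\<And>m. \<exists>x\<ge>m. P x"
  shows "\<exists>x. P x \<and> count_below P x = k"
proof -
  define y where "y = (LEAST y. k < count_below P y)"
  have "k < count_below P y"
    unfolding y_def using count_below_unbounded[OF assms] by (rule LeastI_ex)
  then obtain z where z: "y = Suc z" by (cases y) auto
  then have "\<not> k < count_below P z"
    unfolding y_def by (metis Least_le lessI not_le)
  with \<open>k < count_below P y\<close> show ?thesis
    by (auto simp: z count_below_Suc split: if_splits)
qed

section \<open>Abacus displays\<close>

lemma part_filter_pos:
  "sorted_wrt (\<ge>) (L :: nat list) \<Longrightarrow>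
   part (filter (\<lambda>x. 0 < x) L) r = (if 1 \<le> r \<and> r \<le> length L then L ! (r - 1) else 0)"
proof (induction L arbitrary: r)
  case Nil
  then show ?case by (simp add: Defs.part_def)
next
  case (Cons x L)
  then have sorted: "sorted_wrt (\<ge>) L" and le: "\<forall>y\<in>set L. y \<le> x" by auto
  show ?case
  proof (cases "x = 0")
    case True
    with le have "filter (\<lambda>x. 0 < x) (x # L) = []" "\<forall>y\<in>set L. y = 0"
      by (auto simp: filter_empty_conv)
    then show ?thesis
      using True by (auto simp: Defs.part_def nth_Cons split: nat.splits)
  next
    case False
    then show ?thesis
      using Cons.IH[OF sorted, of "r - 1"]
      by (cases "r = 0 \<or> r = 1") (auto simp: Defs.part_def nth_Cons' split: if_splits)
  qed
qed

lemma part_antimono: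
  assumes "is_partition xs" "1 \<le> r" "r \<le> r'"
  shows "part xs r' \<le> part xs r"
proof (cases "r' \<le> length xs \<and> r \<noteq> r'")
  case True
  then have "xs ! (r' - 1) \<le> xs ! (r - 1)"
    using assms by (intro sorted_wrt_nth_less[where P="(\<ge>)"]) (auto simp: is_partition_def)
  then show ?thesis using True assms by (simp add: Defs.part_def)
qed (auto simp: Defs.part_def)

definition bead :: "nat \<Rightarrow> nat list \<Rightarrow> nat \<Rightarrow> nat" where
  "bead N xs r = part xs r + (N - r)"

lemma display_eq_image_bead: "display N xs = bead N xs ` {1..N}"
proof
  show "display N xs \<subseteq> bead N xs ` {1..N}"
    unfolding display_def bead_def by auto
  show "bead N xs ` {1..N} \<subseteq> display N xs"
    unfolding display_def bead_def by fastforce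
qed

lemma finite_display [simp]: "finite (display N xs)"
  by (simp add: display_eq_image_bead)

lemma bead_strict_antimono:
  assumes "is_partition xs" "1 \<le> r" "r < r'" "r' \<le> N"
  shows "bead N xs r' < bead N xs r"
  using part_antimono[OF assms(1,2), of r'] assms unfolding bead_def by simp

lemma bead_le_iff:
  assumes "is_partition xs" "1 \<le> r" "r \<le> N" "1 \<le> r'" "r' \<le> N"
  shows "bead N xs r \<le> bead N xs r' \<longleftrightarrow> r' \<le> r"
  using bead_strict_antimono[OF assms(1,2), of r' N] bead_strict_antimono[OF assms(1,4), of r N] assms
  by (cases r r' rule: linorder_cases) auto

lemma inj_on_bead: "is_partition xs \<Longrightarrow> inj_on (bead N xs) {1..N}"
  by (rule inj_onI) (auto simp: bead_le_iff dest: eq_refl order.eq_iff[THEN iffD1])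

lemma card_display: "is_partition xs \<Longrightarrow> card (display N xs) = N"
  using card_image[OF inj_on_bead, of xs N] by (simp add: display_eq_image_bead)

lemma card_beads_ge_bead:
  assumes "is_partition xs" "1 \<le> r" "r \<le> N"
  shows "card {y \<in> display N xs. bead N xs r \<le> y} = r"
proof -
  have "{y \<in> display N xs. bead N xs r \<le> y} = bead N xs ` {1..r}"
    using assms by (auto simp: display_eq_image_bead bead_le_iff)
  moreover have "inj_on (bead N xs) {1..r}"
    by (rule inj_on_subset[OF inj_on_bead[OF assms(1)]]) (use assms in auto)
  ultimately show ?thesis by (simp add: card_image)
qed

lemma card_beads_less_bead:
  assumes "is_partition xs" "1 \<le> r" "r \<le> N"
  shows "card {y \<in> display N xs. y < bead N xs r} = N - r"
proof -
  have "card (display N xs) =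
      card {y \<in> display N xs. y < bead N xs r} + card {y \<in> display N xs. bead N xs r \<le> y}"
    by (subst card_Un_disjoint[symmetric]) (auto intro: arg_cong[where f=card])
  then show ?thesis
    using card_display[OF assms(1), of N] card_beads_ge_bead[OF assms] by simp
qed

text \<open>The number of empty positions below \<open>b\<close>; for the \<open>r\<close>-th largest element \<open>b\<^sub>r\<close>
  of \<open>B\<close> it is the part \<open>b\<^sub>r + r - N\<close> assigned by \<^const>\<open>partition_of\<close>.\<close>

definition gaps_below :: "nat set \<Rightarrow> nat \<Rightarrow> nat" where
  "gaps_below B b = b - card {x \<in> B. x < b}"

lemma card_less_le: "card {x \<in> B. x < (b :: nat)} \<le> b"
  using card_mono[of "{..<b}" "{x \<in> B. x < b}"] by auto

lemma gaps_below_mono: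
  assumes "finite B" "b' \<le> b"
  shows "gaps_below B b' \<le> gaps_below B b"
proof -
  have "{x \<in> B. x < b} \<subseteq> {x \<in> B. x < b'} \<union> {b'..<b}" by auto
  then have "card {x \<in> B. x < b} \<le> card ({x \<in> B. x < b'} \<union> {b'..<b})"
    using assms(1) by (intro card_mono) auto
  also have "\<dots> \<le> card {x \<in> B. x < b'} + card {b'..<b}"
    by (rule card_Un_le)
  finally have "card {x \<in> B. x < b} \<le> card {x \<in> B. x < b'} + (b - b')" by simp
  then show ?thesis
    unfolding gaps_below_def using card_less_le[of B b'] assms(2) by simp
qed

lemma card_less_nth_sorted_list_of_set:
  assumes "finite B" "i < card B"
  shows "card {x \<in> B. x < sorted_list_of_set B ! i} = i"
proof -
  let ?xs = "sorted_list_of_set B"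
  have sorted: "sorted_wrt (<) ?xs" and len: "length ?xs = card B" by simp_all
  have "{x \<in> B. x < ?xs ! i} = set (take i ?xs)"
  proof (intro equalityI subsetI)
    fix x assume "x \<in> {x \<in> B. x < ?xs ! i}"
    then have "x \<in> set ?xs" "x < ?xs ! i"
      using assms by auto
    then obtain j where j: "j < length ?xs" "?xs ! j = x" "x < ?xs ! i"
      by (auto simp: in_set_conv_nth)
    then have "j < i"
      using sorted assms len by (metis leD le_less_linear sorted_iff_nth_mono strict_sorted_iff)
    then show "x \<in> set (take i ?xs)"
      using j by (auto simp: in_set_conv_nth intro!: exI[of _ j])
  next
    fix x assume x: "x \<in> set (take i ?xs)"
    then obtain j where "j < i" "?xs ! j = x"
      using assms len by (auto simp: in_set_conv_nth)
    then show "x \<in> {x \<in> B. x < ?xs ! i}"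
      using sorted assms len x by (auto simp: sorted_wrt_nth_less dest: in_set_takeD)
  qed
  moreover have "distinct (take i ?xs)" by simp
  ultimately show ?thesis
    using assms len by (simp add: distinct_card)
qed

lemma card_less_nth_rev_sorted_list_of_set:
  assumes "finite B" "i < card B"
  shows "card {x \<in> B. x < rev (sorted_list_of_set B) ! i} = card B - 1 - i"
  using card_less_nth_sorted_list_of_set[OF assms(1), of "card B - 1 - i"] assms
  by (simp add: rev_nth)

lemma partition_of_eq_filter:
  assumes "finite B"
  shows "partition_of B = filter (\<lambda>x. 0 < x) (map (gaps_below B) (rev (sorted_list_of_set B)))"
proof -
  let ?bs = "rev (sorted_list_of_set B)"
  have "map (\<lambda>r. (?bs ! (r - 1) + r) - card B) [1..<card B + 1] = map (gaps_below B) ?bs"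
  proof (rule nth_equalityI)
    fix i assume "i < length (map (\<lambda>r. (?bs ! (r - 1) + r) - card B) [1..<card B + 1])"
    then have i: "i < card B" by (simp del: upt_Suc)
    then show "map (\<lambda>r. (?bs ! (r - 1) + r) - card B) [1..<card B + 1] ! i = map (gaps_below B) ?bs ! i"
      using card_less_le[of B "?bs ! i"] card_less_nth_rev_sorted_list_of_set[OF assms i] assms
      by (simp add: gaps_below_def nth_upt del: upt_Suc)
  qed (simp add: assms del: upt_Suc)
  then show ?thesis
    unfolding partition_of_def Let_def by simp
qed

lemma sorted_map_gaps_below:
  assumes "finite B"
  shows "sorted_wrt (\<ge>) (map (gaps_below B) (rev (sorted_list_of_set B)))"
  unfolding sorted_wrt_map
  by (rule sorted_wrt_mono_rel[of _ "(\<ge>)"]) (simp_all add: gaps_below_mono assms sorted_wrt_rev)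

lemma is_partition_partition_of: "finite B \<Longrightarrow> is_partition (partition_of B)"
  unfolding is_partition_def by (simp add: partition_of_eq_filter sorted_wrt_filter sorted_map_gaps_below)

lemma length_partition_of: "finite B \<Longrightarrow> length (partition_of B) \<le> card B"
  unfolding partition_of_eq_filter
  by (metis length_filter_le length_map length_rev length_sorted_list_of_set)

lemma mset_partition_of:
  "finite B \<Longrightarrow>
   mset (partition_of B) = filter_mset (\<lambda>x. 0 < x) (image_mset (gaps_below B) (mset_set B))"
  using mset_sorted_list_of_multiset[of "mset_set B"] by (simp add: partition_of_eq_filter)

lemma display_partition_of:
  assumes "finite B"
  shows "display (card B) (partition_of B) = B"
proof -
  let ?N = "card B" and ?bs = "rev (sorted_list_of_set B)"
  have "bead ?N (partition_of B) r = ?bs ! (r - 1)" if "1 \<le> r" "r \<le> ?N" for r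
  proof -
    have "part (partition_of B) r = gaps_below B (?bs ! (r - 1))"
      using part_filter_pos[OF sorted_map_gaps_below[OF assms], of r] that assms
      by (simp add: partition_of_eq_filter)
    moreover have "card {x \<in> B. x < ?bs ! (r - 1)} = ?N - r"
      using card_less_nth_rev_sorted_list_of_set[OF assms, of "r - 1"] that by simp
    ultimately show ?thesis
      using card_less_le[of B "?bs ! (r - 1)"] that by (simp add: bead_def gaps_below_def)
  qed
  then have "display ?N (partition_of B) = (\<lambda>r. ?bs ! (r - 1)) ` {1..?N}"
    unfolding display_eq_image_bead by simp
  also have "\<dots> = (\<lambda>i. ?bs ! i) ` {..<length ?bs}"
    unfolding image_Suc_lessThan[symmetric] image_image using assms by simp
  also have "\<dots> = B"
    using assms nth_image[of "length ?bs" ?bs] by (simp add: lessThan_atLeast0)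
  finally show ?thesis .
qed

lemma sorted_desc_eq_if_mset_eq:
  assumes "sorted_wrt (\<ge>) (xs :: nat list)" "sorted_wrt (\<ge>) ys" "mset xs = mset ys"
  shows "xs = ys"
proof -
  have "sorted (rev xs)" "sorted (rev ys)" "mset (rev xs) = mset (rev ys)"
    using assms by (simp_all add: sorted_wrt_rev)
  then have "rev xs = rev ys" by (metis properties_for_sort)
  then show ?thesis by simp
qed

lemma partition_of_display:
  assumes "is_partition xs" "length xs \<le> N"
  shows "partition_of (display N xs) = xs"
proof (rule sorted_desc_eq_if_mset_eq)
  let ?D = "display N xs"
  have "mset_set ?D = image_mset (bead N xs) (mset_set {1..N})"
    unfolding display_eq_image_bead by (rule image_mset_mset_set[OF inj_on_bead[OF assms(1)], symmetric])
  then have "image_mset (gaps_below ?D) (mset_set ?D) = image_mset (part xs) (mset_set {1..N})"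
    using card_beads_less_bead[OF assms(1)]
    by (auto simp: multiset.map_comp gaps_below_def bead_def intro!: image_mset_cong)
  also have "\<dots> = mset (xs @ replicate (N - length xs) 0)"
  proof -
    have "map (part xs) [1..<N + 1] = xs @ replicate (N - length xs) 0"
      using assms(2) by (intro nth_equalityI) (auto simp: nth_append Defs.part_def nth_upt simp del: upt_Suc)
    moreover have "{1..N} = set [1..<N + 1]" by auto
    ultimately show ?thesis
      by (metis distinct_upt mset_map mset_set_set)
  qed
  moreover have "filter (\<lambda>x. 0 < x) (xs @ replicate (N - length xs) 0) = xs"
    using assms(1) unfolding is_partition_def by (auto simp: filter_id_conv intro!: gr0I)
  ultimately show "mset (partition_of ?D) = mset xs"
    unfolding mset_partition_of[OF finite_display] by (metis mset_filter)
qed (use assms is_partition_partition_of[of "display N xs"] in \<open>simp_all add: is_partition_def\<close>)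

lemma relabel_eq_count_below: "relabel J = count_below (\<lambda>q. int q \<in> J)"
  by (simp add: fun_eq_iff relabel_def count_below_def)

lemma sub_part_eq:
  "sub_part n J xs = partition_of (count_below (\<lambda>q. int q \<in> J) ` {p \<in> display n xs. int p \<in> J})"
  unfolding sub_part_def relabel_eq_count_below ..

lemma I_part_eq:
  "I_part n I xs = partition_of (count_below (\<lambda>x. int x \<in> I) ` {x \<in> display n xs. int x \<in> I})"
  by (simp add: I_part_def sub_part_eq)

lemma comp_part_eq:
  "comp_part n I xs = partition_of (count_below (\<lambda>x. int x \<notin> I) ` {x \<in> display n xs. int x \<notin> I})"
  by (simp add: comp_part_def sub_part_eq)

lemma eq_if_partition_of_count_below_eq:
  assumes "finite A" "finite B" "\<forall>x\<in>A. P x" "\<forall>x\<in>B. P x" "card A = card B"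
    and "partition_of (count_below P ` A) = partition_of (count_below P ` B)"
  shows "A = B"
proof -
  have inj: "inj_on (count_below P) A" "inj_on (count_below P) B"
    using assms(3,4) by (auto intro: inj_on_subset[OF inj_on_count_below])
  have "count_below P ` A = display (card A) (partition_of (count_below P ` A))"
    using display_partition_of[of "count_below P ` A"] assms(1) inj by (simp add: card_image)
  also have "\<dots> = count_below P ` B"
    using display_partition_of[of "count_below P ` B"] assms(2,5,6) inj by (simp add: card_image)
  finally show ?thesis
    using inj_on_image_eq_iff[OF inj_on_count_below] assms(3,4) by blast
qed

lemma uI_partition_partition_of:
  assumes "finite D" "card D = n" "card {x \<in> D. int x \<in> I} = u"
  shows "uI_partition n I u (partition_of D)" and "display n (partition_of D) = D"
  using display_partition_of[OF assms(1)] is_partition_partition_of[OF assms(1)]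
    length_partition_of[OF assms(1)] assms(2,3)
  by (simp_all add: uI_partition_def)

lemma card_display_not_in:
  assumes "uI_partition n I u xs"
  shows "card {p \<in> display n xs. int p \<notin> I} = n - u"
proof -
  have "card (display n xs) = card {p \<in> display n xs. int p \<in> I} + card {p \<in> display n xs. int p \<notin> I}"
    by (subst card_Un_disjoint[symmetric]) (auto intro: arg_cong[where f=card])
  then show ?thesis
    using assms card_display by (simp add: uI_partition_def)
qed

lemma uI_partition_eqI:
  assumes "uI_partition n I u \<xi>" "uI_partition n I u \<xi>'"
    and "I_part n I \<xi> = I_part n I \<xi>'" "comp_part n I \<xi> = comp_part n I \<xi>'"
  shows "\<xi> = \<xi>'"
proof -
  have "{p \<in> display n \<xi>. int p \<in> I} = {p \<in> display n \<xi>'. int p \<in> I}"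
    using assms by (intro eq_if_partition_of_count_below_eq[where P="\<lambda>q. int q \<in> I"])
      (auto simp: uI_partition_def I_part_eq)
  moreover have "{p \<in> display n \<xi>. int p \<notin> I} = {p \<in> display n \<xi>'. int p \<notin> I}"
    using assms card_display_not_in[OF assms(1)] card_display_not_in[OF assms(2)]
    by (intro eq_if_partition_of_count_below_eq[where P="\<lambda>q. int q \<notin> I"])
      (auto simp: comp_part_eq)
  ultimately have "display n \<xi> = display n \<xi>'" by blast
  then show ?thesis
    using assms(1,2) partition_of_display by (metis uI_partition_def)
qed

lemma mset_partition_of_count_below:
  assumes "finite D"
  shows "mset (partition_of (count_below Q ` {x \<in> D. Q x})) =
         filter_mset (\<lambda>x. 0 < x) (image_mset (count_below (\<lambda>y. Q y \<and> y \<notin> D)) (mset_set {x \<in> D. Q x}))"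
proof -
  let ?E = "{x \<in> D. Q x}"
  have inj: "inj_on (count_below Q) ?E"
    by (rule inj_on_subset[OF inj_on_count_below]) auto
  have "gaps_below (count_below Q ` ?E) (count_below Q x) = count_below (\<lambda>y. Q y \<and> y \<notin> D) x"
    if "x \<in> ?E" for x
  proof -
    have "{l \<in> count_below Q ` ?E. l < count_below Q x} = count_below Q ` {y \<in> ?E. y < x}"
      using that count_below_less_iff[of Q] by auto
    then have "card {l \<in> count_below Q ` ?E. l < count_below Q x} = card {y \<in> ?E. y < x}"
      using card_image[OF inj_on_subset[OF inj, of "{y \<in> ?E. y < x}"]] by auto
    moreover have "{y. y < x \<and> Q y} = {y \<in> ?E. y < x} \<union> {y. y < x \<and> Q y \<and> y \<notin> D}"
      by auto
    then have "count_below Q x = card {y \<in> ?E. y < x} + count_below (\<lambda>y. Q y \<and> y \<notin> D) x"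
      unfolding count_below_def using assms by (simp add: card_Un_disjoint disjoint_iff)
    ultimately show ?thesis
      unfolding gaps_below_def by simp
  qed
  then show ?thesis
    using assms inj
    by (auto simp: mset_partition_of image_mset_mset_set[symmetric] multiset.map_comp
        intro!: arg_cong[where f="filter_mset _"] image_mset_cong)
qed

section \<open>Ladder counts from the multiset of bead keys\<close>

definition bead_rank :: "nat set \<Rightarrow> nat \<Rightarrow> nat" where
  "bead_rank D x = card {y \<in> D. x \<le> y}"

text \<open>Row \<open>r\<close> meets the ladder through \<open>(R, C')\<close> iff \<open>c\<close> divides \<open>R - r\<close>, namely in column
  \<open>ladder_col e c R C' r\<close>, and that node belongs to the diagram iff \<open>c \<cdot> bead + e \<cdot> r\<close> reaches
  a bound depending only on the ladder. So ladder counts are determined by the multiset of the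
  keys \<open>(c \<cdot> bead + e \<cdot> r, r mod c)\<close>; the rank of a bead is its row.\<close>

definition ladder_col :: "nat \<Rightarrow> nat \<Rightarrow> int \<Rightarrow> int \<Rightarrow> nat \<Rightarrow> int" where
  "ladder_col e c R C' r = C' + ((R - int r) div int c) * int (e - c)"

definition bead_key :: "nat \<Rightarrow> nat \<Rightarrow> nat set \<Rightarrow> nat \<Rightarrow> nat \<times> nat" where
  "bead_key c e D x = (c * x + e * bead_rank D x, bead_rank D x mod c)"

definition bead_keys :: "nat \<Rightarrow> nat \<Rightarrow> nat set \<Rightarrow> (nat \<times> nat) multiset" where
  "bead_keys c e D = image_mset (bead_key c e D) (mset_set D)"

lemma bead_rank_split:
  "finite D \<Longrightarrow> x \<le> m \<Longrightarrow> bead_rank D x = card {y \<in> D. x \<le> y \<and> y < m} + bead_rank D m"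
  unfolding bead_rank_def by (subst card_Un_disjoint[symmetric]) (auto intro: arg_cong[where f=card])

lemma bead_rank_bead:
  assumes "is_partition xs" "1 \<le> r" "r \<le> N"
  shows "bead_rank (display N xs) (bead N xs r) = r"
  using card_beads_ge_bead[OF assms] by (simp add: bead_rank_def)

lemma bead_keys_display:
  assumes "is_partition xs"
  shows "bead_keys c e (display N xs) = image_mset (\<lambda>r. (c * bead N xs r + e * r, r mod c)) (mset_set {1..N})"
proof -
  have "mset_set (display N xs) = image_mset (bead N xs) (mset_set {1..N})"
    unfolding display_eq_image_bead by (rule image_mset_mset_set[OF inj_on_bead[OF assms], symmetric])
  then show ?thesis
    unfolding bead_keys_def
    by (auto simp: multiset.map_comp bead_key_def bead_rank_bead assms intro!: image_mset_cong)
qed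

lemma card_nodes_ladder:
  assumes "0 < c" "c \<le> e" "length xs \<le> n"
  shows "card (nodes xs \<inter> ladder e (e - c) R C') =
    card {r. 1 \<le> r \<and> r \<le> n \<and> int c dvd (R - int r) \<and> 1 \<le> ladder_col e c R C' r \<and>
             ladder_col e c R C' r \<le> int (part xs r)}" (is "_ = card ?X")
proof -
  have ladder: "(int r, int j) \<in> ladder e (e - c) R C' \<longleftrightarrow>
      int c dvd (R - int r) \<and> int j = ladder_col e c R C' r" for r j
  proof -
    have "(int r, int j) \<in> ladder e (e - c) R C' \<longleftrightarrow>
        (\<exists>k. R - int r = k * int c \<and> int j = C' + k * int (e - c))"
      using assms(2) by (auto simp: ladder_def algebra_simps)
    also have "\<dots> \<longleftrightarrow> int c dvd (R - int r) \<and> int j = ladder_col e c R C' r"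
      using assms(1) by (auto simp: ladder_col_def dvd_def mult.commute)
    finally show ?thesis .
  qed
  have "nodes xs \<inter> ladder e (e - c) R C' = (\<lambda>r. (int r, ladder_col e c R C' r)) ` ?X"
  proof (intro equalityI subsetI)
    fix p assume "p \<in> nodes xs \<inter> ladder e (e - c) R C'"
    then obtain r j where "p = (int r, int j)" "1 \<le> r" "r \<le> length xs" "1 \<le> j" "j \<le> part xs r"
      "int c dvd (R - int r)" "int j = ladder_col e c R C' r"
      unfolding nodes_def using ladder by blast
    then show "p \<in> (\<lambda>r. (int r, ladder_col e c R C' r)) ` ?X"
      using assms(3) by force
  next
    fix p assume "p \<in> (\<lambda>r. (int r, ladder_col e c R C' r)) ` ?X"
    then obtain r where r: "p = (int r, ladder_col e c R C' r)" "r \<in> ?X" by blast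
    then have "r \<le> length xs"
      by (auto simp: Defs.part_def split: if_splits)
    then show "p \<in> nodes xs \<inter> ladder e (e - c) R C'"
      using r ladder[of r "nat (ladder_col e c R C' r)"] unfolding nodes_def
      by (intro IntI CollectI exI[of _ r] exI[of _ "nat (ladder_col e c R C' r)"]) auto
  qed
  moreover have "inj_on (\<lambda>r. (int r, ladder_col e c R C' r)) ?X"
    by (rule inj_onI) simp
  ultimately show ?thesis by (simp add: card_image)
qed

lemma part_less_ladder_col_iff:
  assumes "0 < c" "c \<le> e" "int c dvd (R - int r)" "r \<le> n"
  shows "int (part xs r) < ladder_col e c R C' r \<longleftrightarrow>
    int (c * bead n xs r + e * r) < int c * C' + int (e - c) * R + int c * int n"
proof -
  have "int (c * bead n xs r + e * r) = int c * int (part xs r) + int c * int n + int (e - c) * int r"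
    unfolding bead_def
    by (simp only: of_nat_add of_nat_mult of_nat_diff[OF assms(4)] of_nat_diff[OF assms(2)])
      (simp add: algebra_simps)
  moreover have "int c * ladder_col e c R C' r = int c * C' + (R - int r) * int (e - c)"
  proof -
    have "int c * ((R - int r) div int c) = R - int r"
      using assms(3) by simp
    moreover have "int c * ladder_col e c R C' r = int c * C' + int c * ((R - int r) div int c) * int (e - c)"
      by (simp add: ladder_col_def algebra_simps)
    ultimately show ?thesis by simp
  qed
  moreover have "int (part xs r) < ladder_col e c R C' r \<longleftrightarrow>
      int c * int (part xs r) < int c * ladder_col e c R C' r"
    using assms(1) by simp
  ultimately show ?thesis
    by (simp add: algebra_simps) linarith
qed

lemma card_nodes_ladder_eq_bead_keys:
  assumes "0 < c" "c \<le> e" "is_partition xs" "length xs \<le> n"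
  shows "card (nodes xs \<inter> ladder e (e - c) R C') =
    card {r. 1 \<le> r \<and> r \<le> n \<and> int c dvd (R - int r) \<and> 1 \<le> ladder_col e c R C' r} -
    size (filter_mset (\<lambda>(v, \<rho>). int \<rho> = R mod int c \<and> int v < int c * C' + int (e - c) * R + int c * int n)
      (bead_keys c e (display n xs)))"
proof -
  let ?L = "int c * C' + int (e - c) * R + int c * int n"
  let ?A = "{r. 1 \<le> r \<and> r \<le> n \<and> int c dvd (R - int r) \<and> 1 \<le> ladder_col e c R C' r}"
  let ?Y = "{r \<in> {1..n}. int (r mod c) = R mod int c \<and> int (c * bead n xs r + e * r) < ?L}"
  have mod: "int (r mod c) = R mod int c \<longleftrightarrow> int c dvd (R - int r)" for r
    by (metis mod_eq_dvd_iff of_nat_mod)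
  have "?Y = {r \<in> ?A. int (part xs r) < ladder_col e c R C' r}"
  proof (intro equalityI subsetI)
    fix r assume "r \<in> ?Y"
    then have r: "1 \<le> r" "r \<le> n" "int c dvd (R - int r)" and "int (part xs r) < ladder_col e c R C' r"
      using part_less_ladder_col_iff[OF assms(1,2)] mod by auto
    then show "r \<in> {r \<in> ?A. int (part xs r) < ladder_col e c R C' r}"
      by simp
  next
    fix r assume "r \<in> {r \<in> ?A. int (part xs r) < ladder_col e c R C' r}"
    then show "r \<in> ?Y" using part_less_ladder_col_iff[OF assms(1,2)] mod by auto
  qed
  then have "card {r \<in> ?A. ladder_col e c R C' r \<le> int (part xs r)} = card ?A - card ?Y"
    by (subst card_Diff_subset[symmetric]) (auto intro: finite_subset[of _ "{..n}"] arg_cong[where f=card])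
  moreover have "size (filter_mset (\<lambda>(v, \<rho>). int \<rho> = R mod int c \<and> int v < ?L)
      (bead_keys c e (display n xs))) = card ?Y"
    unfolding bead_keys_display[OF assms(3)] filter_mset_image_mset by simp
  ultimately show ?thesis
    using card_nodes_ladder[OF assms(1,2,4), of R C'] by (simp add: conj_ac)
qed

lemma ladder_equiv_if_bead_keys_eq:
  assumes "0 < c" "c \<le> e" "is_partition xs" "length xs \<le> n" "is_partition ys" "length ys \<le> n"
    and "bead_keys c e (display n xs) = bead_keys c e (display n ys)"
  shows "ladder_equiv e (e - c) xs ys"
  unfolding ladder_equiv_def
  using card_nodes_ladder_eq_bead_keys[OF assms(1-4)] card_nodes_ladder_eq_bead_keys[OF assms(1,2,5,6)]
    assms(7) by simp

section \<open>Sliding a full window of a periodic pattern\<close>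

lemma image_mset_window_Suc:
  assumes "\<And>x. Q (x + e) = Q x" "0 < e" "g (y + e) = g y"
  shows "image_mset g (mset_set {x. y \<le> x \<and> x < y + e \<and> Q x}) =
         image_mset g (mset_set {x. Suc y \<le> x \<and> x < Suc y + e \<and> Q x})"
proof -
  let ?M = "{x. Suc y \<le> x \<and> x < y + e \<and> Q x}"
  have "finite ?M" by (rule finite_subset[of _ "{..<y + e}"]) auto
  show ?thesis
  proof (cases "Q y")
    case True
    then have "{x. y \<le> x \<and> x < y + e \<and> Q x} = insert y ?M"
      and "{x. Suc y \<le> x \<and> x < Suc y + e \<and> Q x} = insert (y + e) ?M"
      using assms(1)[of y] assms(2) by (auto simp: less_Suc_eq)
    then show ?thesis using \<open>finite ?M\<close> assms(3) by simp
  next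
    case False
    then have "{x. y \<le> x \<and> x < y + e \<and> Q x} = ?M"
      and "{x. Suc y \<le> x \<and> x < Suc y + e \<and> Q x} = ?M"
      using assms(1)[of y] by (auto simp: less_Suc_eq le_eq_less_or_eq)
    then show ?thesis by simp
  qed
qed

lemma image_mset_window_shift:
  fixes d :: nat
  assumes "\<And>x. Q (x + e) = Q x" "0 < e" "\<And>y. y + e < B \<Longrightarrow> g (y + e) = g y"
  shows "y + d + e \<le> B \<Longrightarrow>
    image_mset g (mset_set {x. y \<le> x \<and> x < y + e \<and> Q x}) =
    image_mset g (mset_set {x. y + d \<le> x \<and> x < y + d + e \<and> Q x})"
proof (induction d)
  case (Suc d)
  then show ?case
    using image_mset_window_Suc[of Q e g "y + d", OF assms(1,2)] assms(3)[of "y + d"] by simp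
qed simp

lemma finite_window: "finite {x. z \<le> x \<and> x < z + (e :: nat) \<and> P x}"
  by (rule finite_subset[of _ "{..<z + e}"]) auto

text \<open>If the window \<open>[a, a + e)\<close> is occupied exactly at the positions satisfying the
  \<open>e\<close>-periodic predicate \<open>Q\<close>, remove these beads, slide the beads in \<open>[a + e, t + e)\<close>
  down by \<open>e\<close>, and fill the window \<open>[t, t + e)\<close> according to \<open>Q\<close>.\<close>

locale window_slide =
  fixes Q :: "nat \<Rightarrow> bool" and e a t :: nat and D :: "nat set"
  assumes periodic: "\<And>x. Q (x + e) = Q x"
    and pos_period: "0 < e"
    and window_le: "a \<le> t"
    and finite_D: "finite D"
    and full_window: "\<And>x. a \<le> x \<Longrightarrow> x < a + e \<Longrightarrow> x \<in> D \<longleftrightarrow> Q x"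
begin

definition moved :: "nat set" where
  "moved = {x. x < a \<and> x \<in> D \<or> a \<le> x \<and> x < t \<and> x + e \<in> D \<or> t \<le> x \<and> x < t + e \<and> Q x \<or>
              t + e \<le> x \<and> x \<in> D}"

lemma moved_below: "x < a \<Longrightarrow> x \<in> moved \<longleftrightarrow> x \<in> D"
  using window_le by (auto simp: moved_def)

lemma moved_middle: "a \<le> x \<Longrightarrow> x < t \<Longrightarrow> x \<in> moved \<longleftrightarrow> x + e \<in> D"
  by (auto simp: moved_def)

lemma moved_window: "t \<le> x \<Longrightarrow> x < t + e \<Longrightarrow> x \<in> moved \<longleftrightarrow> Q x"
  using window_le by (auto simp: moved_def)

lemma moved_above: "t + e \<le> x \<Longrightarrow> x \<in> moved \<longleftrightarrow> x \<in> D"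
  by (auto simp: moved_def)

definition slide :: "nat \<Rightarrow> nat" where
  "slide y = (if a + e \<le> y \<and> y < t + e then y - e else y)"

lemma periodic_slide: "(\<And>x. R (x + e) = R x) \<Longrightarrow> R (slide y) = R y"
  by (metis le_add2 le_add_diff_inverse2 le_trans slide_def)

lemma inj_on_slide: "inj_on slide {y. y < a \<or> a + e \<le> y}"
  by (rule inj_onI) (auto simp: slide_def split: if_splits)

lemma moved_eq_image_slide:
  "moved = slide ` {y \<in> D. y < a \<or> a + e \<le> y} \<union> {x. t \<le> x \<and> x < t + e \<and> Q x}"
proof (intro equalityI subsetI)
  fix x assume "x \<in> moved"
  then consider "x < a" "x \<in> D" | "a \<le> x" "x < t" "x + e \<in> D" | "t \<le> x" "x < t + e" "Q x"
    | "t + e \<le> x" "x \<in> D"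
    by (auto simp: moved_def)
  then show "x \<in> slide ` {y \<in> D. y < a \<or> a + e \<le> y} \<union> {x. t \<le> x \<and> x < t + e \<and> Q x}"
  proof cases
    case 1
    then show ?thesis by (intro UnI1 image_eqI[of _ _ x]) (auto simp: slide_def)
  next
    case 2
    then show ?thesis by (intro UnI1 image_eqI[of _ _ "x + e"]) (auto simp: slide_def)
  next
    case 4
    then show ?thesis using window_le by (intro UnI1 image_eqI[of _ _ x]) (auto simp: slide_def)
  qed simp
qed (use window_le in \<open>auto simp: moved_def slide_def\<close>)

lemma finite_moved: "finite moved"
  using finite_D by (simp add: moved_eq_image_slide)

lemma mset_set_filter_eq:
  "mset_set {x \<in> D. R x} =
   mset_set {y \<in> D. R y \<and> (y < a \<or> a + e \<le> y)} + mset_set {x. a \<le> x \<and> x < a + e \<and> Q x \<and> R x}"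
  using full_window finite_D finite_window[of a e "\<lambda>x. Q x \<and> R x"]
  by (subst mset_set_Union[symmetric]) (auto intro!: arg_cong[where f=mset_set])

lemma mset_set_filter_moved_eq:
  assumes "\<And>x. R (x + e) = R x"
  shows "mset_set {x \<in> moved. R x} =
    image_mset slide (mset_set {y \<in> D. R y \<and> (y < a \<or> a + e \<le> y)}) +
    mset_set {x. t \<le> x \<and> x < t + e \<and> Q x \<and> R x}"
proof -
  let ?out = "{y \<in> D. R y \<and> (y < a \<or> a + e \<le> y)}"
  have "image_mset slide (mset_set ?out) = mset_set (slide ` ?out)"
    by (rule image_mset_mset_set, rule inj_on_subset[OF inj_on_slide]) auto
  moreover have "{x \<in> moved. R x} = slide ` ?out \<union> {x. t \<le> x \<and> x < t + e \<and> Q x \<and> R x}"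
    unfolding moved_eq_image_slide using periodic_slide[of R, OF assms] window_le by auto
  moreover have "slide ` ?out \<inter> {x. t \<le> x \<and> x < t + e \<and> Q x \<and> R x} = {}"
    using window_le by (auto simp: slide_def)
  ultimately show ?thesis
    using finite_D finite_window[of t e "\<lambda>x. Q x \<and> R x"] by (simp add: mset_set_Union)
qed

lemma card_moved_filter:
  assumes "\<And>x. R (x + e) = R x"
  shows "card {x \<in> moved. R x} = card {x \<in> D. R x}"
proof -
  have per: "\<And>x. (Q (x + e) \<and> R (x + e)) = (Q x \<and> R x)"
    using periodic assms by simp
  have "card {x. t \<le> x \<and> x < t + e \<and> Q x \<and> R x} = card {x. a \<le> x \<and> x < a + e \<and> Q x \<and> R x}"
    using card_window_eq_count_below_period[of "\<lambda>x. Q x \<and> R x" e, OF per] by simp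
  then show ?thesis
    using arg_cong[OF mset_set_filter_moved_eq[of R, OF assms], of size]
      arg_cong[OF mset_set_filter_eq[of R], of size] by simp
qed

lemma bead_rank_moved_above: "t + e \<le> x \<Longrightarrow> bead_rank moved x = bead_rank D x"
proof -
  assume "t + e \<le> x"
  then have "{y \<in> moved. x \<le> y} = {y \<in> D. x \<le> y}"
    using moved_above by auto
  then show ?thesis by (simp add: bead_rank_def)
qed

lemma card_moved_interval_window:
  assumes "t \<le> x" "x \<le> t + e"
  shows "card {y \<in> moved. x \<le> y \<and> y < t + e} = count_below Q (t + e) - count_below Q x"
proof -
  have "{y \<in> moved. x \<le> y \<and> y < t + e} = {y. x \<le> y \<and> y < t + e \<and> Q y}"
    using moved_window assms by auto
  then show ?thesis
    using card_interval_eq_count_below_diff[OF assms(2), of Q] by simp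
qed

lemma bead_rank_moved_window:
  assumes "t \<le> x" "x \<le> t + e"
  shows "bead_rank moved x = count_below Q (t + e) - count_below Q x + bead_rank D (t + e)"
  using bead_rank_split[OF finite_moved assms(2)] card_moved_interval_window[OF assms]
    bead_rank_moved_above[of "t + e"] by simp

lemma bead_rank_moved_middle:
  assumes "a + e \<le> x" "x \<le> t + e"
  shows "bead_rank moved (x - e) = bead_rank D x + count_below Q e"
proof -
  have "bead_rank moved (x - e) = card {y \<in> moved. x - e \<le> y \<and> y < t} + bead_rank moved t"
    using bead_rank_split[OF finite_moved, of "x - e" t] assms by simp
  also have "{y \<in> moved. x - e \<le> y \<and> y < t} = (\<lambda>y. y - e) ` {y \<in> D. x \<le> y \<and> y < t + e}"
  proof (intro equalityI subsetI)
    fix y assume "y \<in> {y \<in> moved. x - e \<le> y \<and> y < t}"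
    then show "y \<in> (\<lambda>y. y - e) ` {y \<in> D. x \<le> y \<and> y < t + e}"
      using assms moved_middle[of y] by (intro image_eqI[of _ _ "y + e"]) auto
  qed (use assms moved_middle in auto)
  also have "card \<dots> = card {y \<in> D. x \<le> y \<and> y < t + e}"
    using assms pos_period by (intro card_image inj_onI) auto
  also have "bead_rank moved t = count_below Q e + bead_rank D (t + e)"
    using bead_rank_moved_window[of t] count_below_add_period[of Q e t, OF periodic] by simp
  finally show ?thesis
    using bead_rank_split[OF finite_D assms(2)] by simp
qed

context
  assumes balanced: "card {x \<in> D. a + e \<le> x \<and> x < t + e} = card {x. a + e \<le> x \<and> x < t + e \<and> Q x}"
begin

lemma bead_rank_full_window:
  assumes "a \<le> x" "x \<le> a + e"
  shows "bead_rank D x = count_below Q (t + e) - count_below Q x + bead_rank D (t + e)"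
proof -
  have "bead_rank D x = card {y \<in> D. x \<le> y \<and> y < a + e} + bead_rank D (a + e)"
    using bead_rank_split[OF finite_D assms(2)] .
  also have "bead_rank D (a + e) = card {y \<in> D. a + e \<le> y \<and> y < t + e} + bead_rank D (t + e)"
    using bead_rank_split[OF finite_D, of "a + e" "t + e"] window_le by simp
  also have "{y \<in> D. x \<le> y \<and> y < a + e} = {y. x \<le> y \<and> y < a + e \<and> Q y}"
    using full_window assms by auto
  finally show ?thesis
    using balanced card_interval_eq_count_below_diff[OF assms(2), of Q] window_le
      card_interval_eq_count_below_diff[of "a + e" "t + e" Q]
      count_below_mono[OF assms(2), of Q] count_below_mono[of "a + e" "t + e" Q] by simp
qed

lemma bead_rank_moved_below:
  assumes "x \<le> a"
  shows "bead_rank moved x = bead_rank D x"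
proof -
  have "bead_rank moved a = bead_rank D a"
    using bead_rank_moved_middle[of "a + e"] bead_rank_full_window[of a] bead_rank_full_window[of "a + e"]
      count_below_add_period[of Q e a, OF periodic] count_below_mono[of "a + e" "t + e" Q] window_le
    by simp
  moreover have "{y \<in> moved. x \<le> y \<and> y < a} = {y \<in> D. x \<le> y \<and> y < a}"
    using moved_below by auto
  ultimately show ?thesis
    using bead_rank_split[OF finite_D assms] bead_rank_split[OF finite_moved assms] by simp
qed

lemma bead_key_moved_slide:
  assumes "y < a \<or> a + e \<le> y"
  shows "bead_key (count_below Q e) e moved (slide y) = bead_key (count_below Q e) e D y"
proof -
  consider "y < a" | "a + e \<le> y" "y < t + e" | "t + e \<le> y"
    using assms by linarith
  then show ?thesis
  proof cases
    case 2
    then obtain z where "y = z + e"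
      using le_add_diff_inverse2 le_trans le_add2 by metis
    then show ?thesis
      using bead_rank_moved_middle[of y] 2 by (simp add: slide_def bead_key_def algebra_simps)
  qed (simp_all add: slide_def bead_key_def bead_rank_moved_below bead_rank_moved_above)
qed

theorem bead_keys_moved: "bead_keys (count_below Q e) e moved = bead_keys (count_below Q e) e D"
proof -
  let ?c = "count_below Q e"
  let ?out = "{y \<in> D. y < a \<or> a + e \<le> y}"
  let ?window = "\<lambda>z. {x. z \<le> x \<and> x < z + e \<and> Q x}"
  define h where "h x = count_below Q (t + e) - count_below Q x + bead_rank D (t + e)" for x
  define g where "g x = (?c * x + e * h x, h x mod ?c)" for x
  have "image_mset (bead_key ?c e moved \<circ> slide) (mset_set ?out) =
      image_mset (bead_key ?c e D) (mset_set ?out)"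
    using finite_D by (intro image_mset_cong) (simp add: bead_key_moved_slide)
  moreover have "image_mset (bead_key ?c e moved) (mset_set (?window t)) =
      image_mset g (mset_set (?window t))"
    using finite_window
    by (intro image_mset_cong) (simp add: g_def h_def bead_key_def bead_rank_moved_window)
  moreover have "image_mset (bead_key ?c e D) (mset_set (?window a)) = image_mset g (mset_set (?window a))"
    using finite_window
    by (intro image_mset_cong) (simp add: g_def h_def bead_key_def bead_rank_full_window)
  moreover have "image_mset g (mset_set (?window a)) = image_mset g (mset_set (?window t))"
  proof -
    have "g (y + e) = g y" if "y + e < t + e" for y
    proof -
      have "h y = h (y + e) + ?c"
        using count_below_add_period[of Q e y, OF periodic] count_below_mono[of "y + e" "t + e" Q] that
        by (simp add: h_def)
      then show ?thesis by (simp add: g_def algebra_simps)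
    qed
    then show ?thesis
      using image_mset_window_shift[of Q e "t + e" g a "t - a", OF periodic pos_period] window_le by simp
  qed
  ultimately show ?thesis
    using mset_set_filter_moved_eq[of "\<lambda>_. True"] mset_set_filter_eq[of "\<lambda>_. True"]
    by (simp add: bead_keys_def multiset.map_comp)
qed

end

context
  assumes low: "\<And>y. y < a + e \<Longrightarrow> Q y \<Longrightarrow> y \<in> D"
begin

lemma count_gaps_below_window: "x \<le> a + e \<Longrightarrow> count_below (\<lambda>y. Q y \<and> y \<notin> D) x = 0"
  using low by (auto simp: count_below_def)

lemma count_gaps_moved_below: "x \<le> a \<Longrightarrow> count_below (\<lambda>y. Q y \<and> y \<notin> moved) x = 0"
  using low moved_below by (auto simp: count_below_def)

lemma count_gaps_moved_middle:
  "a \<le> x \<Longrightarrow> x \<le> t \<Longrightarrow> count_below (\<lambda>y. Q y \<and> y \<notin> moved) x = count_below (\<lambda>y. Q y \<and> y \<notin> D) (x + e)"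
proof (induction x rule: dec_induct)
  case base
  then show ?case using count_gaps_below_window count_gaps_moved_below by simp
next
  case (step x)
  then show ?case using moved_middle[of x] periodic[of x] by (simp add: count_below_Suc)
qed

lemma count_gaps_moved_window:
  "t \<le> x \<Longrightarrow> x \<le> t + e \<Longrightarrow> count_below (\<lambda>y. Q y \<and> y \<notin> moved) x = count_below (\<lambda>y. Q y \<and> y \<notin> D) (t + e)"
proof (induction x rule: dec_induct)
  case base
  then show ?case using count_gaps_moved_middle[of t] window_le by simp
next
  case (step x)
  then show ?case using moved_window[of x] by (simp add: count_below_Suc)
qed

lemma count_gaps_moved_above:
  "t + e \<le> x \<Longrightarrow> count_below (\<lambda>y. Q y \<and> y \<notin> moved) x = count_below (\<lambda>y. Q y \<and> y \<notin> D) x"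
proof (induction x rule: dec_induct)
  case base
  then show ?case using count_gaps_moved_window[of "t + e"] by simp
next
  case (step x)
  then show ?case using moved_above[of x] by (simp add: count_below_Suc)
qed

lemma count_gaps_moved_slide:
  "y < a \<or> a + e \<le> y \<Longrightarrow>
   count_below (\<lambda>y. Q y \<and> y \<notin> moved) (slide y) = count_below (\<lambda>y. Q y \<and> y \<notin> D) y"
  using count_gaps_moved_below[of y] count_gaps_below_window[of y] count_gaps_moved_middle[of "y - e"]
    count_gaps_moved_above[of y]
  by (auto simp: slide_def)

theorem mset_partition_of_moved:
  assumes "0 < count_below (\<lambda>y. Q y \<and> y \<notin> D) (t + e)"
  shows "mset (partition_of (count_below Q ` {x \<in> moved. Q x})) =
    replicate_mset (count_below Q e) (count_below (\<lambda>y. Q y \<and> y \<notin> D) (t + e)) +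
    mset (partition_of (count_below Q ` {x \<in> D. Q x}))"
proof -
  let ?gaps = "count_below (\<lambda>y. Q y \<and> y \<notin> D)" and ?gaps' = "count_below (\<lambda>y. Q y \<and> y \<notin> moved)"
  let ?out = "{y \<in> D. Q y \<and> (y < a \<or> a + e \<le> y)}"
  let ?window = "\<lambda>z. {x. z \<le> x \<and> x < z + e \<and> Q x}"
  have "image_mset ?gaps' (mset_set (?window t)) = image_mset (\<lambda>_. ?gaps (t + e)) (mset_set (?window t))"
    using finite_window count_gaps_moved_window by (intro image_mset_cong) simp
  then have "image_mset ?gaps' (mset_set (?window t)) = replicate_mset (count_below Q e) (?gaps (t + e))"
    using card_window_eq_count_below_period[of Q e t, OF periodic] by (simp add: image_mset_const_eq)
  moreover have "image_mset ?gaps' (image_mset slide (mset_set ?out)) = image_mset ?gaps (mset_set ?out)"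
    unfolding multiset.map_comp using finite_D by (intro image_mset_cong) (simp add: count_gaps_moved_slide)
  moreover have "filter_mset (\<lambda>x. 0 < x) (replicate_mset k (?gaps (t + e))) =
      replicate_mset k (?gaps (t + e))" for k
    using assms by (induction k) auto
  moreover have "filter_mset (\<lambda>x. 0 < x) (image_mset ?gaps (mset_set (?window a))) = {#}"
    using finite_window by (auto simp: count_gaps_below_window)
  ultimately show ?thesis
    using finite_D finite_moved mset_set_filter_moved_eq[of Q, OF periodic] mset_set_filter_eq[of Q]
    by (simp add: mset_partition_of_count_below)
qed

end

theorem image_count_below_Not_moved:
  assumes "\<And>x. x \<in> D \<Longrightarrow> \<not> Q x \<Longrightarrow> x < t + e"
  shows "count_below (\<lambda>x. \<not> Q x) ` {x \<in> moved. \<not> Q x} =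
    (\<lambda>v. if count_below (\<lambda>x. \<not> Q x) (a + e) \<le> v then v - count_below (\<lambda>x. \<not> Q x) e else v) `
      count_below (\<lambda>x. \<not> Q x) ` {x \<in> D. \<not> Q x}"
proof -
  let ?N = "count_below (\<lambda>x. \<not> Q x)"
  have per: "\<And>x. (\<not> Q (x + e)) = (\<not> Q x)" using periodic by simp
  have "{x \<in> D. \<not> Q x} = {y \<in> D. (y < a \<or> a + e \<le> y) \<and> \<not> Q y}"
    using full_window not_le by blast
  then have moved_not: "{x \<in> moved. \<not> Q x} = slide ` {x \<in> D. \<not> Q x}"
    unfolding moved_eq_image_slide using periodic_slide[of Q, OF periodic] by auto
  have slide: "?N (slide y) = (if ?N (a + e) \<le> ?N y then ?N y - ?N e else ?N y)"
    if "y \<in> D" "\<not> Q y" for y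
  proof (cases "y < a")
    case True
    then show ?thesis
      using count_below_mono[of y a "\<lambda>x. \<not> Q x"] count_below_add_period[of "\<lambda>x. \<not> Q x" e a, OF per]
      by (auto simp: slide_def)
  next
    case False
    then have "a + e \<le> y" "y < t + e"
      using that full_window[of y] assms by force+
    then show ?thesis
      using count_below_add_period[of "\<lambda>x. \<not> Q x" e "y - e", OF per]
        count_below_mono[of "a + e" y "\<lambda>x. \<not> Q x"] by (simp add: slide_def)
  qed
  show ?thesis
    unfolding moved_not image_image by (rule image_cong[OF refl]) (simp add: slide)
qed

end

lemma LeastI_not_restricted:
  assumes "\<not> restricted k lam" "s = (LEAST s. 1 \<le> s \<and> k \<le> part lam s - part lam (Suc s))"
  shows "1 \<le> s" "k \<le> part lam s - part lam (Suc s)"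
proof -
  obtain r where "1 \<le> r \<and> k \<le> part lam r - part lam (Suc r)"
    using assms(1) unfolding restricted_def by (auto simp: not_less)
  then show "1 \<le> s" "k \<le> part lam s - part lam (Suc s)"
    unfolding assms(2) by (metis (mono_tags, lifting) LeastI)+
qed

context
  fixes lam :: "nat list" and N s k :: nat
  assumes partition: "is_partition lam" and length: "length lam \<le> N"
    and pos_s: "1 \<le> s" and pos_k: "0 < k" and gap: "k \<le> part lam s - part lam (Suc s)"
begin

lemma gap_row_le: "s \<le> N"
  using gap pos_k length by (auto simp: Defs.part_def split: if_splits)

lemma gap_le_bead: "k \<le> bead N lam s"
  using gap by (simp add: bead_def)

lemma gap_below_bead:
  assumes "x \<in> display N lam" "x < bead N lam s"
  shows "x + k < bead N lam s"
proof -
  obtain r where r: "1 \<le> r" "r \<le> N" "x = bead N lam r"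
    using assms(1) unfolding display_eq_image_bead by auto
  then have "s < r"
    using assms(2) bead_le_iff[OF partition pos_s gap_row_le r(1,2)] by simp
  then have "part lam r \<le> part lam (Suc s)"
    using part_antimono[OF partition, of "Suc s" r] by simp
  then show ?thesis
    using r \<open>s < r\<close> gap pos_k unfolding bead_def by linarith
qed

lemma tau_of_partition:
  "is_partition (tau_of k s lam) \<and> length (tau_of k s lam) \<le> N \<and>
   display N (tau_of k s lam) = (\<lambda>x. if bead N lam s \<le> x then x - k else x) ` display N lam"
proof -
  define M where "M = map (\<lambda>r. if r \<le> s then part lam r - k else part lam r) [1..<length lam + 1]"
  have tau: "tau_of k s lam = filter (\<lambda>x. 0 < x) M" unfolding tau_of_def M_def ..
  have M_length: "length M = length lam"
    unfolding M_def by (simp del: upt_Suc)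
  have M_nth: "M ! i = (if i + 1 \<le> s then part lam (i + 1) - k else part lam (i + 1))"
    if "i < length lam" for i
    unfolding M_def using that by (simp add: nth_upt del: upt_Suc)
  have sorted: "sorted_wrt (\<ge>) M"
  proof (rule sorted_wrt_iff_nth_less[THEN iffD2], intro allI impI)
    fix i j assume ij: "i < j" "j < length M"
    have "part lam (j + 1) \<le> part lam (i + 1)"
      using part_antimono[OF partition, of "i + 1" "j + 1"] ij by simp
    moreover have "s < j + 1 \<Longrightarrow> part lam (j + 1) \<le> part lam (Suc s)"
      using part_antimono[OF partition, of "Suc s" "j + 1"] by simp
    moreover have "i + 1 \<le> s \<Longrightarrow> part lam s \<le> part lam (i + 1)"
      using part_antimono[OF partition, of "i + 1" s] by simp
    ultimately show "M ! j \<le> M ! i"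
      using M_nth M_length ij gap by (auto simp: M_def simp del: upt_Suc)
  qed
  have part_tau: "part (tau_of k s lam) r = (if r \<le> s then part lam r - k else part lam r)" if "1 \<le> r" for r
    using part_filter_pos[OF sorted, of r] M_nth[of "r - 1"] that gap pos_k
    by (auto simp: tau M_def Defs.part_def simp del: upt_Suc)
  have "bead N (tau_of k s lam) r = (if bead N lam s \<le> bead N lam r then bead N lam r - k else bead N lam r)"
    if "1 \<le> r" "r \<le> N" for r
    using part_tau[OF that(1)] bead_le_iff[OF partition pos_s gap_row_le that] gap
      part_antimono[OF partition that(1), of s]
    by (auto simp: bead_def)
  then show ?thesis
    using sorted length
    by (auto simp: tau is_partition_def sorted_wrt_filter display_eq_image_bead image_image M_def
        intro!: image_cong order.trans[OF length_filter_le] simp del: upt_Suc)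
qed

end

lemma copies_join_eqI:
  assumes "is_partition xs" "mset xs = replicate_mset c s + mset ys"
  shows "xs = copies_join c [s] ys"
  using assms
  by (intro sorted_desc_eq_if_mset_eq) (auto simp: is_partition_def copies_join_def sorted_wrt_rev)

lemma full_window_below_gap:
  assumes periodic: "\<And>x. Q (x + e) = Q x"
    and "p \<in> D" "\<not> Q p"
    and low: "\<And>y. y < p \<Longrightarrow> Q y \<Longrightarrow> y \<in> D"
    and gap: "\<And>x. x \<in> D \<Longrightarrow> \<not> Q x \<Longrightarrow> x < p \<Longrightarrow>
      count_below (\<lambda>x. \<not> Q x) x + count_below (\<lambda>x. \<not> Q x) e < count_below (\<lambda>x. \<not> Q x) p"
    and le: "count_below (\<lambda>x. \<not> Q x) e \<le> count_below (\<lambda>x. \<not> Q x) p"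
  shows "e \<le> p" and "\<And>x. p - e \<le> x \<Longrightarrow> x < p \<Longrightarrow> x \<in> D \<longleftrightarrow> Q x"
proof -
  let ?N = "count_below (\<lambda>x. \<not> Q x)"
  show "e \<le> p"
    using count_below_strict_mono[of p e "\<lambda>x. \<not> Q x"] le \<open>\<not> Q p\<close> by (meson leD le_less_linear)
  then have split: "?N p = ?N (p - e) + ?N e"
    using count_below_add_period[of "\<lambda>x. \<not> Q x" e "p - e"] periodic by simp
  fix x assume x: "p - e \<le> x" "x < p"
  show "x \<in> D \<longleftrightarrow> Q x"
    using low[OF x(2)] gap[OF _ _ x(2)] count_below_mono[OF x(1), of "\<lambda>x. \<not> Q x"] split by fastforce
qed

lemma unbounded_gaps:
  assumes periodic: "\<And>x. Q (x + e) = Q x" and "0 < count_below Q e" and "finite D"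
  shows "\<exists>x\<ge>m. Q x \<and> x \<notin> D"
proof -
  obtain y where "Q y" "y < e"
    using assms(2) by (auto simp: count_below_def card_gt_0_iff)
  obtain M where M: "\<forall>x\<in>D. x < M"
    using assms(3) finite_nat_set_iff_bounded by blast
  have "Q (y + e * k)" for k
  proof (induction k)
    case (Suc k)
    then show ?case using periodic[of "y + e * k"] by (simp add: algebra_simps)
  qed (simp add: \<open>Q y\<close>)
  moreover have "m + M \<le> y + e * (m + M)"
    using \<open>y < e\<close> by (cases e) auto
  ultimately show ?thesis
    using M by (intro exI[of _ "y + e * (m + M)"]) auto
qed

text \<open>Counting from \<open>p\<close> to \<open>m\<close>, trading the non-\<open>Q\<close>-beads for the \<open>Q\<close>-gaps leaves the
  number of occupied positions unchanged.\<close>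

lemma card_beads_interval_eq_card_Q:
  assumes "finite D" "p \<in> D" "\<not> Q p"
    and separated: "\<And>x y. x \<in> D \<Longrightarrow> \<not> Q x \<Longrightarrow> Q y \<Longrightarrow> y \<notin> D \<Longrightarrow> x < y"
    and below: "\<And>x. x \<in> D \<Longrightarrow> \<not> Q x \<Longrightarrow> x < m"
    and count: "card {x \<in> D. \<not> Q x \<and> p \<le> x} = count_below (\<lambda>y. Q y \<and> y \<notin> D) m"
  shows "card {x \<in> D. p \<le> x \<and> x < m} = card {x. p \<le> x \<and> x < m \<and> Q x}"
proof -
  let ?beads = "{x \<in> D. Q x \<and> p \<le> x \<and> x < m}"
  have "{x \<in> D. p \<le> x \<and> x < m} = {x \<in> D. \<not> Q x \<and> p \<le> x} \<union> ?beads"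
    using below by auto
  then have "card {x \<in> D. p \<le> x \<and> x < m} = card {x \<in> D. \<not> Q x \<and> p \<le> x} + card ?beads"
    using assms(1) by (simp add: card_Un_disjoint disjoint_iff)
  moreover have "{x. p \<le> x \<and> x < m \<and> Q x} = ?beads \<union> {y. y < m \<and> Q y \<and> y \<notin> D}"
    using separated[OF assms(2,3)] by (auto simp: less_imp_le)
  then have "card {x. p \<le> x \<and> x < m \<and> Q x} = card ?beads + count_below (\<lambda>y. Q y \<and> y \<notin> D) m"
    using assms(1) by (simp add: card_Un_disjoint disjoint_iff count_below_def)
  ultimately show ?thesis
    using count by simp
qed

lemma obtain_gap_bead:
  assumes "finite D" "1 \<le> s" "0 < k" "k \<le> part lam s - part lam (Suc s)"
    and lam: "lam = partition_of (count_below R ` {x \<in> D. R x})"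
  obtains p where "p \<in> D" "R p" "count_below R p = bead (card {x \<in> D. R x}) lam s"
    and "k \<le> count_below R p"
    and "\<And>x. x \<in> D \<Longrightarrow> R x \<Longrightarrow> x < p \<Longrightarrow> count_below R x + k < count_below R p"
    and "card {x \<in> D. R x \<and> p \<le> x} = s"
proof -
  let ?B = "count_below R ` {x \<in> D. R x}"
  have inj: "inj_on (count_below R) {x \<in> D. R x}"
    by (rule inj_on_subset[OF inj_on_count_below]) auto
  then have card: "card ?B = card {x \<in> D. R x}"
    by (rule card_image)
  have display: "display (card ?B) lam = ?B" and partition: "is_partition lam"
    and length: "length lam \<le> card ?B"
    using assms(1) display_partition_of is_partition_partition_of length_partition_of lam by auto
  note gap = gap_row_le[OF partition length assms(2,3,4)] gap_le_bead[OF partition length assms(2,3,4)]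
    gap_below_bead[OF partition length assms(2,3,4)]
  have "bead (card ?B) lam s \<in> ?B"
    using gap(1) assms(2) display unfolding display_eq_image_bead by auto
  then obtain p where p: "p \<in> D" "R p" "count_below R p = bead (card ?B) lam s"
    by auto
  have below: "count_below R x + k < count_below R p" if "x \<in> D" "R x" "x < p" for x
    using gap(3)[of "count_below R x"] count_below_strict_mono[of x p R, OF that(3,2)] display p(3) that
    by auto
  have "count_below R ` {x \<in> D. R x \<and> p \<le> x} = {y \<in> ?B. count_below R p \<le> y}"
    using p(1,2) count_below_le_iff[of R p] by auto
  moreover have "card (count_below R ` {x \<in> D. R x \<and> p \<le> x}) = card {x \<in> D. R x \<and> p \<le> x}"
    by (rule card_image, rule inj_on_subset[OF inj]) auto
  ultimately have "card {x \<in> D. R x \<and> p \<le> x} = s"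
    using card_beads_ge_bead[OF partition assms(2) gap(1)] display p(3) by simp
  then show ?thesis
    using that p below gap(2) card by simp
qed

lemma exists_window_slide:
  assumes periodic: "\<And>x. Q (x + e) = Q x" and "0 < count_below Q e" "0 < count_below (\<lambda>x. \<not> Q x) e"
    and "finite D"
    and separated: "\<And>x y. x \<in> D \<Longrightarrow> \<not> Q x \<Longrightarrow> Q y \<Longrightarrow> y \<notin> D \<Longrightarrow> x < y"
    and "1 \<le> s" "count_below (\<lambda>x. \<not> Q x) e \<le> part lam s - part lam (Suc s)"
    and lam: "lam = partition_of (count_below (\<lambda>x. \<not> Q x) ` {x \<in> D. \<not> Q x})"
  obtains a t where "window_slide Q e a t D"
    and "\<And>y. y < a + e \<Longrightarrow> Q y \<Longrightarrow> y \<in> D"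
    and "card {x \<in> D. a + e \<le> x \<and> x < t + e} = card {x. a + e \<le> x \<and> x < t + e \<and> Q x}"
    and "count_below (\<lambda>y. Q y \<and> y \<notin> D) (t + e) = s"
    and "\<And>x. x \<in> D \<Longrightarrow> \<not> Q x \<Longrightarrow> x < t + e"
    and "count_below (\<lambda>x. \<not> Q x) (a + e) = bead (card {x \<in> D. \<not> Q x}) lam s"
proof -
  obtain p where p: "p \<in> D" "\<not> Q p" "count_below (\<lambda>x. \<not> Q x) p = bead (card {x \<in> D. \<not> Q x}) lam s"
    and le: "count_below (\<lambda>x. \<not> Q x) e \<le> count_below (\<lambda>x. \<not> Q x) p"
    and gap: "\<And>x. x \<in> D \<Longrightarrow> \<not> Q x \<Longrightarrow> x < p \<Longrightarrow>
      count_below (\<lambda>x. \<not> Q x) x + count_below (\<lambda>x. \<not> Q x) e < count_below (\<lambda>x. \<not> Q x) p"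
    and top: "card {x \<in> D. \<not> Q x \<and> p \<le> x} = s"
    using obtain_gap_bead[OF assms(4,6,3,7) lam] by blast
  have low: "\<And>y. y < p \<Longrightarrow> Q y \<Longrightarrow> y \<in> D"
    using separated[OF p(1,2)] by (meson leD less_imp_le)
  note window = full_window_below_gap[OF periodic p(1,2) low gap le]
  obtain b where b: "Q b" "b \<notin> D" "count_below (\<lambda>y. Q y \<and> y \<notin> D) b = s - 1"
    using ex_count_below_eq[of "\<lambda>y. Q y \<and> y \<notin> D" "s - 1"] unbounded_gaps[OF periodic assms(2,4)] by blast
  have "p < b"
    using separated[OF p(1,2) b(1,2)] .
  then have ends: "p - e + e = p" "b + 1 - e + e = b + 1" "p - e \<le> b + 1 - e"
    using window(1) by auto
  have gaps: "count_below (\<lambda>y. Q y \<and> y \<notin> D) (b + 1) = s"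
    using b assms(6) by (simp add: count_below_Suc)
  have below: "\<And>x. x \<in> D \<Longrightarrow> \<not> Q x \<Longrightarrow> x < b + 1"
    using separated[OF _ _ b(1,2)] less_SucI by fastforce
  show ?thesis
  proof (rule that[of "p - e" "b + 1 - e", unfolded ends])
    show "window_slide Q e (p - e) (b + 1 - e) D"
      by unfold_locales (use periodic assms(2) ends window(2) \<open>finite D\<close> in \<open>auto intro: Nat.gr0I\<close>)
    show "card {x \<in> D. p \<le> x \<and> x < b + 1} = card {x. p \<le> x \<and> x < b + 1 \<and> Q x}"
      using card_beads_interval_eq_card_Q[of D p Q "b + 1", OF assms(4) p(1,2) separated below] top gaps
      by simp
  qed (use low gaps below p(3) in auto)
qed

theorem exists_display_sliding_full_window:
  assumes periodic: "\<And>x. Q (x + e) = Q x" and pos: "0 < count_below Q e" "0 < count_below (\<lambda>x. \<not> Q x) e"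
    and "finite D"
    and separated: "\<And>x y. x \<in> D \<Longrightarrow> \<not> Q x \<Longrightarrow> Q y \<Longrightarrow> y \<notin> D \<Longrightarrow> x < y"
    and s: "1 \<le> s" "count_below (\<lambda>x. \<not> Q x) e \<le> part lam s - part lam (Suc s)"
    and lam: "lam = partition_of (count_below (\<lambda>x. \<not> Q x) ` {x \<in> D. \<not> Q x})"
  obtains D' where "finite D'" "card D' = card D" "card {x \<in> D'. Q x} = card {x \<in> D. Q x}"
    and "bead_keys (count_below Q e) e D' = bead_keys (count_below Q e) e D"
    and "mset (partition_of (count_below Q ` {x \<in> D'. Q x})) =
      replicate_mset (count_below Q e) s + mset (partition_of (count_below Q ` {x \<in> D. Q x}))"
    and "partition_of (count_below (\<lambda>x. \<not> Q x) ` {x \<in> D'. \<not> Q x}) =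
      tau_of (count_below (\<lambda>x. \<not> Q x) e) s lam"
proof -
  let ?N = "count_below (\<lambda>x. \<not> Q x)"
  let ?M = "card {x \<in> D. \<not> Q x}"
  obtain a t where slide: "window_slide Q e a t D"
    and low: "\<And>y. y < a + e \<Longrightarrow> Q y \<Longrightarrow> y \<in> D"
    and balanced: "card {x \<in> D. a + e \<le> x \<and> x < t + e} = card {x. a + e \<le> x \<and> x < t + e \<and> Q x}"
    and gaps: "count_below (\<lambda>y. Q y \<and> y \<notin> D) (t + e) = s"
    and below: "\<And>x. x \<in> D \<Longrightarrow> \<not> Q x \<Longrightarrow> x < t + e"
    and bead: "?N (a + e) = bead ?M lam s"
    using exists_window_slide[OF assms] by blast
  interpret window_slide Q e a t D by (rule slide)
  let ?B = "?N ` {x \<in> D. \<not> Q x}"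
  have "card ?B = ?M"
    by (rule card_image, rule inj_on_subset[OF inj_on_count_below]) auto
  then have lam': "display ?M lam = ?B" "is_partition lam" "length lam \<le> ?M"
    using display_partition_of[of ?B] is_partition_partition_of[of ?B] length_partition_of[of ?B]
      finite_D lam by simp_all
  note tau = tau_of_partition[OF lam'(2,3) s(1) pos(2) s(2)]
  have "?N ` {x \<in> moved. \<not> Q x} = display ?M (tau_of (?N e) s lam)"
    using image_count_below_Not_moved[of, OF below] tau unfolding bead lam'(1)[symmetric] by simp
  then have "partition_of (?N ` {x \<in> moved. \<not> Q x}) = tau_of (?N e) s lam"
    using partition_of_display[OF tau[THEN conjunct1] tau[THEN conjunct2, THEN conjunct1]] by (simp only:)
  then show ?thesis
    using that[of moved] finite_moved card_moved_filter[of "\<lambda>_. True"] card_moved_filter[of Q, OF periodic]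
      bead_keys_moved[OF balanced] mset_partition_of_moved[OF low] gaps s(1) by simp
qed

lemma union_of_classes_periodic: "union_of_classes e c I \<Longrightarrow> int (x + e) \<in> I \<longleftrightarrow> int x \<in> I"
  by (auto simp: union_of_classes_def)

lemma count_below_union_of_classes:
  assumes "union_of_classes e c I"
  shows "count_below (\<lambda>x. int x \<in> I) e = c"
proof -
  obtain C where C: "C \<subseteq> {0..<int e}" "card C = c" "I = {x. x mod int e \<in> C}"
    using assms unfolding union_of_classes_def by blast
  then have "{y. y < e \<and> int y \<in> I} = nat ` C"
    by (force simp: image_iff intro!: exI[where x="int _"])
  moreover have "inj_on nat C"
    using C(1) by (intro inj_onI) (metis atLeastLessThan_iff eq_nat_nat_iff subsetD)
  ultimately show ?thesis
    using C(2) by (simp add: count_below_def card_image)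
qed

theorem mainTheorem17:
  fixes e c n u s :: nat and I :: "int set" and \<nu> :: "nat list"
  assumes "4 \<le> e" and "2 \<le> c" and "c \<le> e - 2"
    and "union_of_classes e c I"
    and "e dvd n" and "u \<le> n"
    and "uI_partition n I u \<nu>"
    and "I_separated n I \<nu>"
    and "\<not> restricted (e - c) (comp_part n I \<nu>)"
    and "s = (LEAST s. 1 \<le> s \<and>
               e - c \<le> part (comp_part n I \<nu>) s - part (comp_part n I \<nu>) (Suc s))"
  shows "(\<exists>\<xi>. uI_partition n I u \<xi> \<and>
             I_part n I \<xi> = copies_join c [s] (I_part n I \<nu>) \<and>
             comp_part n I \<xi> = tau_of (e - c) s (comp_part n I \<nu>)) \<and>
         (\<forall>\<xi>. uI_partition n I u \<xi> \<and>
             I_part n I \<xi> = copies_join c [s] (I_part n I \<nu>) \<and>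
             comp_part n I \<xi> = tau_of (e - c) s (comp_part n I \<nu>)
           \<longrightarrow> ladder_equiv e (e - c) \<nu> \<xi>)"
proof -
  let ?Q = "\<lambda>x. int x \<in> I" and ?lam = "comp_part n I \<nu>"
  have periodic: "\<And>x. ?Q (x + e) = ?Q x"
    and count: "count_below ?Q e = c" "count_below (\<lambda>x. \<not> ?Q x) e = e - c"
    using union_of_classes_periodic[OF assms(4)] count_below_union_of_classes[OF assms(4)]
      count_below_Not_add[of ?Q e] by auto
  note s = LeastI_not_restricted[OF assms(9,10)]
  have separated: "\<And>x y. x \<in> display n \<nu> \<Longrightarrow> \<not> ?Q x \<Longrightarrow> ?Q y \<Longrightarrow> y \<notin> display n \<nu> \<Longrightarrow> x < y"
    using assms(8) by (auto simp: I_separated_def)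
  have pos: "0 < count_below ?Q e" "0 < count_below (\<lambda>x. \<not> ?Q x) e"
    using count assms(1-3) by simp_all
  obtain D where D: "finite D" "card D = card (display n \<nu>)"
      "card {x \<in> D. ?Q x} = card {x \<in> display n \<nu>. ?Q x}"
    and keys: "bead_keys c e D = bead_keys c e (display n \<nu>)"
    and I_part: "mset (partition_of (count_below ?Q ` {x \<in> D. ?Q x})) =
      replicate_mset c s + mset (I_part n I \<nu>)"
    and comp_part: "partition_of (count_below (\<lambda>x. \<not> ?Q x) ` {x \<in> D. \<not> ?Q x}) =
      tau_of (e - c) s ?lam"
    using exists_display_sliding_full_window[OF periodic pos finite_display separated s(1)
        s(2)[folded count(2)] comp_part_eq[of n I \<nu>]]
    unfolding count I_part_eq by blast
  define \<xi> where "\<xi> = partition_of D"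
  have "card D = n" "card {x \<in> D. ?Q x} = u"
    using D(2,3) assms(7) card_display by (simp_all add: uI_partition_def)
  then have uI: "uI_partition n I u \<xi>" and display: "display n \<xi> = D"
    using uI_partition_partition_of[OF D(1)] by (simp_all add: \<xi>_def)
  moreover have I_part: "I_part n I \<xi> = copies_join c [s] (I_part n I \<nu>)"
    using I_part D(1) is_partition_partition_of[of "count_below ?Q ` {x \<in> D. ?Q x}"]
    by (intro copies_join_eqI) (simp_all add: I_part_eq display)
  moreover have comp_part: "comp_part n I \<xi> = tau_of (e - c) s ?lam"
    using comp_part by (simp add: comp_part_eq display)
  moreover have "ladder_equiv e (e - c) \<nu> \<xi>"
    using ladder_equiv_if_bead_keys_eq[of c e \<nu> n \<xi>] keys uI assms(1-3,7)
    by (simp add: display uI_partition_def)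
  moreover have "\<xi>' = \<xi>" if "uI_partition n I u \<xi>'" "I_part n I \<xi>' = copies_join c [s] (I_part n I \<nu>)"
    "comp_part n I \<xi>' = tau_of (e - c) s ?lam" for \<xi>'
    using uI_partition_eqI[OF that(1) uI] that(2,3) I_part comp_part by simp
  ultimately show ?thesis
    by blast
qed

end
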